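(* In the multi-agent combinatorial-actions contract model (described in the context) with an XOS reward function $f$ and $n$ agents, for any contract $\boldsymbol{\alpha}^\star$ and any pure Nash equilibrium $S^\star$ of $\boldsymbol{\alpha}^\star$, there exists an equal-pay contract $\boldsymbol{\alpha}$ and a pure Nash equilibrium $S$ of $\boldsymbol{\alpha}$ such that $$\Big(1-\sum_{i\in A}\alpha_i\Big)f(S)\ \ge\ \Omega\!\left(\frac{\log\log n}{\log n}\right)\Big(1-\sum_{i\in A}\alpha^\star_i\Big)f(S^\star).$$
   Context: Model: principal and agents $A=[n]$; each agent $i$ has a finite action set $T_i$ (pairwise disjoint), $T=\bigsqcup_iT_i$, costs $c_j\ge0$, $c(S_i)=\sum_{j\in S_i}c_j$. Reward $f:2^T\to[0,1]$ monotone, $f(\emptyset)=0$; $f$ is XOS if $f(S)=\max_{\ell\in\mathcal{L}}\ell(S)$ for a finite family $\mathcal{L}$ of additive functions. Contract $\boldsymbol{\alpha}\in[0,1]^A$; agent $i$'s utility $\alpha_if(S)-c(S\cap T_i)$; $S$ is a pure Nash equilibrium of $\boldsymbol{\alpha}$ if no agent can gain by changing her own subset of actions. A contract is equal-pay if all its nonzero entries are equal. The $\Omega(\cdot)$ hides a universal constant. *)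

theory Defs
  imports Complex_Main
begin

text \<open>Instance: agents are 0..n-1; actions are natural numbers in the finite set T;
  own j is the agent owning action j, so T_i = {j in T. own j = i}.\<close>

definition actions_of :: "nat set \<Rightarrow> (nat \<Rightarrow> nat) \<Rightarrow> nat \<Rightarrow> nat set" where
  "actions_of T own i = {j \<in> T. own j = i}"

definition cost :: "(nat \<Rightarrow> real) \<Rightarrow> nat set \<Rightarrow> real" where
  "cost c S = (\<Sum>j\<in>S. c j)"

definition valid_instance ::
  "nat \<Rightarrow> nat set \<Rightarrow> (nat \<Rightarrow> nat) \<Rightarrow> (nat \<Rightarrow> real) \<Rightarrow> bool" where
  "valid_instance n T own c \<longleftrightarrow> finite T \<and> (\<forall>j\<in>T. own j < n) \<and> (\<forall>j\<in>T. c j \<ge> 0)"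

definition valid_reward :: "nat set \<Rightarrow> (nat set \<Rightarrow> real) \<Rightarrow> bool" where
  "valid_reward T f \<longleftrightarrow> f {} = 0 \<and>
     (\<forall>S\<subseteq>T. 0 \<le> f S \<and> f S \<le> 1) \<and>
     (\<forall>S U. S \<subseteq> U \<and> U \<subseteq> T \<longrightarrow> f S \<le> f U)"

definition XOS :: "nat set \<Rightarrow> (nat set \<Rightarrow> real) \<Rightarrow> bool" where
  "XOS T f \<longleftrightarrow> (\<exists>L :: (nat \<Rightarrow> real) set. finite L \<and> L \<noteq> {} \<and>
     (\<forall>w\<in>L. \<forall>j\<in>T. w j \<ge> 0) \<and>
     (\<forall>S\<subseteq>T. f S = Max ((\<lambda>w. \<Sum>j\<in>S. w j) ` L)))"

definition contract :: "nat \<Rightarrow> (nat \<Rightarrow> real) \<Rightarrow> bool" where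
  "contract n \<alpha> \<longleftrightarrow> (\<forall>i<n. 0 \<le> \<alpha> i \<and> \<alpha> i \<le> 1)"

definition equal_pay :: "nat \<Rightarrow> (nat \<Rightarrow> real) \<Rightarrow> bool" where
  "equal_pay n \<alpha> \<longleftrightarrow> (\<forall>i<n. \<forall>k<n. \<alpha> i \<noteq> 0 \<longrightarrow> \<alpha> k \<noteq> 0 \<longrightarrow> \<alpha> i = \<alpha> k)"

definition utility ::
  "nat set \<Rightarrow> (nat \<Rightarrow> nat) \<Rightarrow> (nat \<Rightarrow> real) \<Rightarrow> (nat set \<Rightarrow> real) \<Rightarrow> (nat \<Rightarrow> real)
   \<Rightarrow> nat \<Rightarrow> nat set \<Rightarrow> real" where
  "utility T own c f \<alpha> i S = \<alpha> i * f S - cost c (S \<inter> actions_of T own i)"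

definition pure_NE ::
  "nat \<Rightarrow> nat set \<Rightarrow> (nat \<Rightarrow> nat) \<Rightarrow> (nat \<Rightarrow> real) \<Rightarrow> (nat set \<Rightarrow> real) \<Rightarrow> (nat \<Rightarrow> real)
   \<Rightarrow> nat set \<Rightarrow> bool" where
  "pure_NE n T own c f \<alpha> S \<longleftrightarrow> S \<subseteq> T \<and>
     (\<forall>i<n. \<forall>S'\<subseteq>actions_of T own i.
        utility T own c f \<alpha> i ((S - actions_of T own i) \<union> S') \<le> utility T own c f \<alpha> i S)"

definition principal_utility :: "nat \<Rightarrow> (nat set \<Rightarrow> real) \<Rightarrow> (nat \<Rightarrow> real) \<Rightarrow> nat set \<Rightarrow> real" where
  "principal_utility n f \<alpha> S = (1 - (\<Sum>i<n. \<alpha> i)) * f S"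

end

theory Submission
  imports Defs
begin

text \<open>
  Fix an additive function \<open>w\<close> of the XOS family with \<open>w(S\<^sup>*) = f(S\<^sup>*)\<close> and let \<open>x\<^sub>i\<close>
  be the \<open>w\<close>-weight of agent \<open>i\<close>'s actions in \<open>S\<^sup>*\<close>. Since agent \<open>i\<close> could drop all of
  them, the equilibrium condition gives \<open>c(S\<^sup>*\<^sub>i) \<le> \<alpha>\<^sup>*\<^sub>i x\<^sub>i\<close>. Paying the same \<open>a\<close> to a set
  \<open>B\<close> of agents makes \<open>a f(D) - c(D)\<close> an exact potential, so its maximiser over the actions
  of \<open>B\<close> is an equilibrium; comparing it with the actions of \<open>B\<close> in \<open>S\<^sup>*\<close> shows that it is
  worth at least \<open>(\<Sum>\<^sub>i\<^sub>\<in>\<^sub>B x\<^sub>i)/3\<close> when \<open>\<alpha>\<^sup>*\<^sub>i \<le> 2a/3\<close> on \<open>B\<close>, and the principal keeps a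
  quarter of that when \<open>a |B| \<le> 3/4\<close>.

  Let \<open>i\<close> be an agent with the largest \<open>\<alpha>\<^sup>*\<^sub>i\<close>. If the other agents carry little weight,
  paying \<open>i\<close> alone \<open>(1 + \<alpha>\<^sup>*\<^sub>i)/2\<close> suffices. Otherwise the other \<open>\<alpha>\<^sup>*\<^sub>j\<close> are at most \<open>1/2\<close>
  and sum to at most 1. With \<open>\<theta> = \<lfloor>\<surd>ln n\<rfloor>\<close>, sort these agents into
  \<open>K + 1 = O(ln n / ln ln n)\<close> levels with \<open>\<alpha>\<^sup>*\<^sub>j \<approx> \<theta>\<^sup>-\<^sup>b/2\<close>. Level \<open>b\<close> has at most
  \<open>\<theta>\<^sup>b(1 + 2\<theta> \<Sigma>\<^sub>b)\<close> agents, where \<open>\<Sigma>\<^sub>b\<close> is its total \<open>\<alpha>\<^sup>*\<close>. Hence some level has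
  a subset of at most \<open>\<theta>\<^sup>b\<close> agents carrying a \<open>1/(K + 1 + 2\<theta>) = \<Omega>(ln ln n / ln n)\<close>
  fraction of the weight, and paying each of them \<open>3/(4\<theta>\<^sup>b)\<close> does the job.
\<close>

section \<open>Heavy subsets of weighted sets\<close>

lemma ex_max_on_finite:
  fixes g :: "'a \<Rightarrow> 'b::linorder"
  assumes "finite A" "A \<noteq> {}"
  shows "\<exists>x\<in>A. \<forall>y\<in>A. g y \<le> g x"
proof -
  have "Max (g ` A) \<in> g ` A"
    using assms by simp
  then obtain x where "x \<in> A" "g x = Max (g ` A)"
    by auto
  then show ?thesis
    using assms(1) by (metis Max_ge finite_imageI imageI)
qed

lemma sum_remove_min_ge:
  fixes x :: "'a \<Rightarrow> real"
  assumes "finite P" "e \<in> P" "\<forall>j\<in>P. x e \<le> x j"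
  shows "(real (card P) - 1) * sum x P \<le> real (card P) * sum x (P - {e})"
proof -
  have "1 \<le> card P"
    using assms(1,2) by (auto simp: Suc_le_eq card_gt_0_iff)
  then have "(real (card P) - 1) * x e \<le> sum x (P - {e})"
    using sum_bounded_below[of "P - {e}" "x e" x] assms by simp
  moreover have "sum x P = sum x (P - {e}) + x e"
    using assms by (simp add: sum.remove)
  ultimately show ?thesis
    by (simp add: algebra_simps)
qed

lemma ex_subset_card_le_sum_ratio:
  fixes x :: "'a \<Rightarrow> real"
  assumes "finite P" "\<forall>j\<in>P. 0 \<le> x j" "m \<le> card P"
  shows "\<exists>B\<subseteq>P. card B \<le> m \<and> real m * sum x P \<le> real (card P) * sum x B"
  using assms
proof (induction "card P - m" arbitrary: P)
  case 0
  then show ?case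
    by auto
next
  case (Suc k)
  obtain e where e: "e \<in> P" "\<forall>j\<in>P. x e \<le> x j"
    using ex_max_on_finite[of P "\<lambda>j. - x j"] Suc.prems Suc.hyps(2) by fastforce
  define P' where "P' = P - {e}"
  have card_P': "card P' = card P - 1"
    using e Suc.prems by (simp add: P'_def)
  have "k = card P' - m" "finite P'" "\<forall>j\<in>P'. 0 \<le> x j" "m \<le> card P'"
    using Suc.hyps(2) Suc.prems card_P' by (auto simp: P'_def)
  then obtain B where B: "B \<subseteq> P'" "card B \<le> m" "real m * sum x P' \<le> real (card P') * sum x B"
    using Suc.hyps(1) by blast
  have sum_B: "0 \<le> sum x B"
    using B(1) Suc.prems(2) by (intro sum_nonneg) (auto simp: P'_def)
  have "real m * sum x P \<le> real (card P) * sum x B"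
  proof (cases "card P' = 0")
    case True
    then have "m = 0"
      using Suc.hyps(2) card_P' by linarith
    then show ?thesis
      using sum_B by simp
  next
    case False
    have card_P: "real (card P') = real (card P) - 1"
      using card_P' False by simp
    have "real (card P') * (real m * sum x P) = real m * ((real (card P) - 1) * sum x P)"
      using card_P by simp
    also have "\<dots> \<le> real m * (real (card P) * sum x P')"
      using sum_remove_min_ge[OF Suc.prems(1) e] by (intro mult_left_mono) (auto simp: P'_def)
    also have "\<dots> = real (card P) * (real m * sum x P')"
      by simp
    also have "\<dots> \<le> real (card P) * (real (card P') * sum x B)"
      using B(3) by (intro mult_left_mono) auto
    finally show ?thesis
      using False by (simp add: algebra_simps)
  qed
  then show ?case
    using B by (auto simp: P'_def)
qed

lemma ex_subset_card_le_sum_fraction: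
  fixes x :: "'a \<Rightarrow> real"
  assumes "finite P" "\<forall>j\<in>P. 0 \<le> x j" "0 < m" "1 \<le> r" "real (card P) \<le> real m * r"
  shows "\<exists>B\<subseteq>P. card B \<le> m \<and> sum x P \<le> r * sum x B"
proof (cases "card P \<le> m")
  case True
  have "sum x P \<le> r * sum x P"
    using assms(2,4) sum_nonneg[of P x] by (simp add: mult_le_cancel_right1)
  then show ?thesis
    using True by blast
next
  case False
  obtain B where B: "B \<subseteq> P" "card B \<le> m" "real m * sum x P \<le> real (card P) * sum x B"
    using ex_subset_card_le_sum_ratio[OF assms(1,2), of m] False by auto
  have "real (card P) * sum x B \<le> (real m * r) * sum x B"
    using assms(2,5) B(1) by (intro mult_right_mono sum_nonneg) auto
  with B(3) have "real m * sum x P \<le> real m * (r * sum x B)"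
    by simp
  then show ?thesis
    using B(1,2) assms(3) by auto
qed

lemma ex_scale_level:
  fixes r \<theta> :: real
  assumes "r \<le> 1"
  shows "\<exists>b\<le>K. r * \<theta>^b \<le> 1 \<and> (b < K \<longrightarrow> 1 < r * \<theta>^Suc b)"
proof (induction K)
  case 0
  then show ?case
    using assms by simp
next
  case (Suc K)
  then obtain b where b: "b \<le> K" "r * \<theta>^b \<le> 1" "b < K \<longrightarrow> 1 < r * \<theta>^Suc b"
    by blast
  show ?case
  proof (cases "b < K \<or> 1 < r * \<theta>^Suc b")
    case True
    then show ?thesis
      using b by (intro exI[of _ b]) auto
  next
    case False
    then show ?thesis
      using b by (intro exI[of _ "Suc K"]) auto
  qed
qed

lemma ex_weighted_sum_le_weight_mult:
  fixes wt z :: "'a \<Rightarrow> real"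
  assumes "finite I" "I \<noteq> {}" "\<forall>i\<in>I. 0 \<le> wt i"
  shows "\<exists>b\<in>I. (\<Sum>i\<in>I. wt i * z i) \<le> sum wt I * z b"
proof -
  obtain b where b: "b \<in> I" "\<forall>i\<in>I. z i \<le> z b"
    using ex_max_on_finite[OF assms(1,2)] by blast
  have "(\<Sum>i\<in>I. wt i * z i) \<le> (\<Sum>i\<in>I. wt i * z b)"
    using assms(3) b(2) by (intro sum_mono mult_left_mono) auto
  then show ?thesis
    using b(1) by (auto simp: sum_distrib_right)
qed

lemma card_le_mult_sum:
  fixes \<beta> :: "'a \<Rightarrow> real"
  assumes "\<forall>j\<in>P. 1 \<le> r * \<beta> j"
  shows "real (card P) \<le> r * sum \<beta> P"
proof -
  have "real (card P) = (\<Sum>j\<in>P. 1)"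
    by simp
  also have "\<dots> \<le> (\<Sum>j\<in>P. r * \<beta> j)"
    using assms by (intro sum_mono) auto
  finally show ?thesis
    by (simp add: sum_distrib_left)
qed

lemma ex_level_subset_sum_ge:
  fixes x :: "'a \<Rightarrow> real" and wt :: "nat \<Rightarrow> real" and lvl :: "'a \<Rightarrow> nat" and m :: "nat \<Rightarrow> nat"
  assumes fin: "finite A" and lvl: "\<forall>j\<in>A. lvl j \<le> K" and x: "\<forall>j\<in>A. 0 \<le> x j"
    and m: "\<forall>b. 0 < m b" and wt: "\<forall>b. 1 \<le> wt b"
    and card: "\<forall>b\<le>K. real (card {j\<in>A. lvl j = b}) \<le> real (m b) * wt b"
  shows "\<exists>b B. B \<subseteq> {j\<in>A. lvl j = b} \<and> card B \<le> m b \<and> sum x A \<le> sum wt {..K} * sum x B"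
proof -
  define P where "P b = {j\<in>A. lvl j = b}" for b
  have "\<exists>B\<subseteq>P b. card B \<le> m b \<and> sum x (P b) \<le> wt b * sum x B" if "b \<le> K" for b
    using ex_subset_card_le_sum_fraction[of "P b" x "m b" "wt b"] fin x m wt card that
    by (auto simp: P_def)
  then obtain Bs where Bs: "\<And>b. b \<le> K \<Longrightarrow> Bs b \<subseteq> P b \<and> card (Bs b) \<le> m b \<and>
      sum x (P b) \<le> wt b * sum x (Bs b)"
    by metis
  have "sum x A = (\<Sum>b\<le>K. sum x (P b))"
    unfolding P_def using fin lvl by (intro sum.group[symmetric]) auto
  also have "\<dots> \<le> (\<Sum>b\<le>K. wt b * sum x (Bs b))"
    using Bs by (intro sum_mono) auto
  finally have "sum x A \<le> (\<Sum>b\<le>K. wt b * sum x (Bs b))" .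
  moreover have "\<forall>b\<in>{..K}. 0 \<le> wt b"
    using wt by (meson order_trans zero_le_one)
  then obtain b where b: "b \<le> K" "(\<Sum>b\<le>K. wt b * sum x (Bs b)) \<le> sum wt {..K} * sum x (Bs b)"
    using ex_weighted_sum_le_weight_mult[of "{..K}" wt "\<lambda>b. sum x (Bs b)"] by auto
  ultimately show ?thesis
    using Bs[OF b(1)] unfolding P_def by (intro exI[of _ b] exI[of _ "Bs b"]) auto
qed

text \<open>Level \<open>b < K\<close> holds the \<open>j\<close> with \<open>\<theta>\<^sup>-\<^sup>(\<^sup>b\<^sup>+\<^sup>1\<^sup>) < 2\<beta>\<^sub>j \<le> \<theta>\<^sup>-\<^sup>b\<close>; level \<open>K\<close>
  also takes all smaller \<open>\<beta>\<^sub>j\<close>.\<close>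

lemma ex_level_map:
  fixes \<beta> :: "'a \<Rightarrow> real" and \<theta> K :: nat
  assumes fin: "finite A" and card_A: "card A \<le> \<theta>^K" and \<beta>: "\<forall>j\<in>A. 0 \<le> \<beta> j \<and> \<beta> j \<le> 1/2"
  shows "\<exists>lvl. (\<forall>j\<in>A. lvl j \<le> K \<and> 2 * real \<theta>^lvl j * \<beta> j \<le> 1) \<and>
    (\<forall>b\<le>K. real (card {j\<in>A. lvl j = b}) \<le> real \<theta>^b * (1 + 2 * real \<theta> * sum \<beta> {j\<in>A. lvl j = b}))"
proof -
  have "\<forall>j\<in>A. \<exists>b\<le>K. 2 * \<beta> j * \<theta>^b \<le> 1 \<and> (b < K \<longrightarrow> 1 < 2 * \<beta> j * \<theta>^Suc b)"
    using \<beta> ex_scale_level[where \<theta>="real \<theta>" and K=K] by auto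
  then obtain lvl where lvl: "\<And>j. j \<in> A \<Longrightarrow> lvl j \<le> K \<and> 2 * \<beta> j * \<theta>^lvl j \<le> 1 \<and>
      (lvl j < K \<longrightarrow> 1 < 2 * \<beta> j * \<theta>^Suc (lvl j))"
    by metis
  have "real (card {j\<in>A. lvl j = b}) \<le> real \<theta>^b * (1 + 2 * real \<theta> * sum \<beta> {j\<in>A. lvl j = b})"
    if b: "b \<le> K" for b
  proof (cases "b = K")
    case True
    have "card {j\<in>A. lvl j = b} \<le> card A"
      using fin by (intro card_mono) auto
    then have "real (card {j\<in>A. lvl j = b}) \<le> real \<theta>^b"
      using card_A True by (metis of_nat_le_iff of_nat_power order_trans)
    also have "\<dots> \<le> real \<theta>^b * (1 + 2 * real \<theta> * sum \<beta> {j\<in>A. lvl j = b})"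
    proof -
      have "0 \<le> sum \<beta> {j\<in>A. lvl j = b}"
        using \<beta> by (intro sum_nonneg) auto
      then show ?thesis
        by (simp add: mult_le_cancel_left1)
    qed
    finally show ?thesis .
  next
    case False
    then have "real (card {j\<in>A. lvl j = b}) \<le> real \<theta>^b * (2 * real \<theta>) * sum \<beta> {j\<in>A. lvl j = b}"
      using b by (intro card_le_mult_sum) (auto simp: algebra_simps dest!: lvl)
    also have "\<dots> \<le> real \<theta>^b * (1 + 2 * real \<theta> * sum \<beta> {j\<in>A. lvl j = b})"
      by (simp add: algebra_simps)
    finally show ?thesis .
  qed
  then show ?thesis
    using lvl by (intro exI[of _ lvl]) (auto simp: mult.commute mult.left_commute)
qed

lemma ex_level_subset:
  fixes \<beta> x :: "'a \<Rightarrow> real" and \<theta> K :: nat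
  assumes fin: "finite A" and \<theta>: "1 \<le> \<theta>" and card_A: "card A \<le> \<theta>^K"
    and \<beta>: "\<forall>j\<in>A. 0 \<le> \<beta> j \<and> \<beta> j \<le> 1/2" and sum_\<beta>: "sum \<beta> A \<le> 1"
    and x: "\<forall>j\<in>A. 0 \<le> x j"
  shows "\<exists>B b. B \<subseteq> A \<and> card B \<le> \<theta>^b \<and> (\<forall>j\<in>B. 2 * real \<theta>^b * \<beta> j \<le> 1) \<and>
           sum x A \<le> (real K + 1 + 2 * real \<theta>) * sum x B"
proof -
  obtain lvl where lvl: "\<forall>j\<in>A. lvl j \<le> K \<and> 2 * real \<theta>^lvl j * \<beta> j \<le> 1"
    and card: "\<forall>b\<le>K. real (card {j\<in>A. lvl j = b}) \<le> real \<theta>^b * (1 + 2 * real \<theta> * sum \<beta> {j\<in>A. lvl j = b})"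
    using ex_level_map[OF fin card_A \<beta>] by blast
  define wt where "wt b = 1 + 2 * real \<theta> * sum \<beta> {j\<in>A. lvl j = b}" for b
  have "0 \<le> sum \<beta> {j\<in>A. lvl j = b}" for b
    using \<beta> by (intro sum_nonneg) auto
  then have wt: "\<forall>b. 1 \<le> wt b"
    by (simp add: wt_def)
  obtain b B where B: "B \<subseteq> {j\<in>A. lvl j = b}" "card B \<le> \<theta>^b"
    and sum_x_A: "sum x A \<le> sum wt {..K} * sum x B"
    using ex_level_subset_sum_ge[of A lvl K x "\<lambda>b. \<theta>^b" wt] fin lvl x \<theta> wt card
    by (auto simp: wt_def)
  have "(\<Sum>b\<le>K. sum \<beta> {j\<in>A. lvl j = b}) = sum \<beta> A"
    using fin lvl by (intro sum.group) auto
  then have "sum wt {..K} = real K + 1 + 2 * real \<theta> * sum \<beta> A"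
    by (simp add: wt_def sum.distrib sum_distrib_left[symmetric])
  also have "\<dots> \<le> real K + 1 + 2 * real \<theta>"
    using sum_\<beta> by (simp add: mult_left_le)
  finally have "sum wt {..K} * sum x B \<le> (real K + 1 + 2 * real \<theta>) * sum x B"
    using B(1) x by (intro mult_right_mono sum_nonneg) auto
  then show ?thesis
    using B lvl sum_x_A by (intro exI[of _ B] exI[of _ b]) auto
qed

lemma ex_max_index_others_lt_half:
  fixes \<beta> :: "'a \<Rightarrow> real"
  assumes fin: "finite I" "I \<noteq> {}" and nonneg: "\<forall>j\<in>I. 0 \<le> \<beta> j" and sum_I: "sum \<beta> I < 1"
  shows "\<exists>i\<in>I. \<beta> i < 1 \<and> sum \<beta> (I - {i}) < 1 \<and> (\<forall>j\<in>I - {i}. \<beta> j < 1/2)"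
proof -
  obtain i where i: "i \<in> I" "\<forall>j\<in>I. \<beta> j \<le> \<beta> i"
    using ex_max_on_finite[OF fin] by blast
  have sum_split: "sum \<beta> I = \<beta> i + sum \<beta> (I - {i})"
    using fin(1) i(1) by (simp add: sum.remove)
  have "0 \<le> sum \<beta> (I - {i})"
    using nonneg by (intro sum_nonneg) auto
  moreover have "\<beta> j < 1/2" if j: "j \<in> I - {i}" for j
  proof -
    have "\<beta> j \<le> sum \<beta> (I - {i})"
      using fin(1) nonneg j by (intro member_le_sum) auto
    moreover have "\<beta> j \<le> \<beta> i"
      using i(2) j by blast
    ultimately show ?thesis
      using sum_split sum_I by linarith
  qed
  ultimately show ?thesis
    using i nonneg sum_split sum_I by (intro bexI[of _ i]) auto
qed

section \<open>Level parameters\<close>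

lemma ln_ge_if_exp_le:
  fixes x :: real
  assumes "exp a \<le> x"
  shows "a \<le> ln x"
  using assms exp_gt_zero[of a] ln_ge_iff[of x a] by linarith

lemma ln_le_two_sqrt:
  fixes t :: real
  assumes "0 < t"
  shows "ln t \<le> 2 * sqrt t"
proof -
  have "ln t = 2 * ln (sqrt t)"
    using assms by (simp add: ln_sqrt)
  also have "\<dots> \<le> 2 * (sqrt t - 1)"
    using ln_le_minus_one[of "sqrt t"] assms by simp
  finally show ?thesis
    by simp
qed

lemma ln_floor_sqrt_ge:
  fixes t :: real
  assumes "16 \<le> t"
  shows "ln t / 4 \<le> ln (real (nat \<lfloor>sqrt t\<rfloor>))"
proof -
  have sqrt_t: "4 \<le> sqrt t"
    using real_sqrt_le_mono[OF assms] by simp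
  have "4 * ln 2 = ln (16::real)"
    using ln_realpow[of 2 4] by simp
  also have "\<dots> \<le> ln t"
    using assms by simp
  finally have "ln t / 4 \<le> ln t / 2 - ln 2"
    by simp
  also have "\<dots> = ln (sqrt t / 2)"
    using sqrt_t assms by (simp add: ln_div ln_sqrt)
  also have "\<dots> \<le> ln (real (nat \<lfloor>sqrt t\<rfloor>))"
    using sqrt_t by (intro ln_mono) linarith+
  finally show ?thesis .
qed

lemma ln_ln_div_ln_bounds:
  fixes x :: real
  assumes "exp 1 \<le> x"
  shows "0 \<le> ln (ln x) / ln x" "ln (ln x) / ln x \<le> 1"
proof -
  have "1 \<le> ln x"
    using ln_ge_if_exp_le[OF assms] .
  moreover have "ln (ln x) \<le> ln x - 1"
    using calculation by (intro ln_le_minus_one) simp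
  ultimately show "0 \<le> ln (ln x) / ln x" "ln (ln x) / ln x \<le> 1"
    by simp_all
qed

lemma power_nat_ceiling_log_bounds:
  fixes \<theta> x :: real
  assumes "1 < \<theta>" "1 \<le> x"
  shows "x \<le> \<theta> ^ nat \<lceil>ln x / ln \<theta>\<rceil>" "real (nat \<lceil>ln x / ln \<theta>\<rceil>) \<le> ln x / ln \<theta> + 1"
proof -
  define K where "K = nat \<lceil>ln x / ln \<theta>\<rceil>"
  have "0 < ln \<theta>" "0 \<le> ln x"
    using assms by simp_all
  then have "0 \<le> ln x / ln \<theta>"
    by simp
  then have "real K = of_int \<lceil>ln x / ln \<theta>\<rceil>"
    unfolding K_def by (intro of_nat_nat) simp
  then have K: "ln x / ln \<theta> \<le> real K" "real K \<le> ln x / ln \<theta> + 1"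
    using ceiling_correct[of "ln x / ln \<theta>"] by linarith+
  then have "ln x \<le> ln (\<theta> ^ K)"
    using \<open>0 < ln \<theta>\<close> assms(1) by (simp add: ln_realpow divide_le_eq)
  then show "x \<le> \<theta> ^ nat \<lceil>ln x / ln \<theta>\<rceil>"
    using assms unfolding K_def by simp
  show "real (nat \<lceil>ln x / ln \<theta>\<rceil>) \<le> ln x / ln \<theta> + 1"
    using K(2) by (simp add: K_def)
qed

lemma ex_level_parameters:
  assumes "exp 16 \<le> real n"
  shows "\<exists>\<theta> K. 2 \<le> \<theta> \<and> n \<le> \<theta>^K \<and>
    real K + 1 + 2 * real \<theta> \<le> 10 * ln (real n) / ln (ln (real n))"
proof -
  define t where "t = ln (real n)"
  define \<theta> where "\<theta> = nat \<lfloor>sqrt t\<rfloor>"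
  define K where "K = nat \<lceil>t / ln \<theta>\<rceil>"
  have t: "16 \<le> t"
    unfolding t_def by (rule ln_ge_if_exp_le[OF assms])
  have sqrt_t: "4 \<le> sqrt t"
    using real_sqrt_le_mono[OF t] by simp
  have "real \<theta> = of_int \<lfloor>sqrt t\<rfloor>"
    using t unfolding \<theta>_def by (intro of_nat_nat) simp
  then have \<theta>: "real \<theta> \<le> sqrt t" "2 \<le> \<theta>"
    using sqrt_t by linarith+
  have ln_t: "0 < ln t"
    using t by simp
  have ln_\<theta>: "ln t / 4 \<le> ln \<theta>"
    using ln_floor_sqrt_ge[OF t] by (simp add: \<theta>_def)
  have "1 \<le> real n"
    using assms exp_ge_add_one_self[of 16] by linarith
  then have "real n \<le> real \<theta> ^ K" "real K \<le> t / ln \<theta> + 1"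
    using power_nat_ceiling_log_bounds[of "real \<theta>" "real n"] \<theta>(2) by (simp_all add: K_def t_def)
  then have n_le: "n \<le> \<theta>^K"
    by (metis of_nat_le_iff of_nat_power)
  moreover have "t / ln \<theta> \<le> 4 * t / ln t"
    using divide_left_mono[OF ln_\<theta>, of t] ln_\<theta> ln_t t by (simp add: mult.commute)
  ultimately have K: "real K \<le> 4 * t / ln t + 1"
    using \<open>real K \<le> t / ln \<theta> + 1\<close> by linarith
  have "ln t * sqrt t \<le> 2 * sqrt t * sqrt t"
    using ln_le_two_sqrt[of t] t by (intro mult_right_mono) auto
  also have "\<dots> = 2 * t"
    using t by simp
  finally have "sqrt t \<le> 2 * t / ln t"
    using ln_t by (simp add: le_divide_eq mult.commute)
  then have "real K + 1 + 2 * real \<theta> \<le> 10 * t / ln t"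
    using K \<theta>(1) sqrt_t by (simp add: add_divide_distrib[symmetric])
  then show ?thesis
    using n_le \<theta>(2) unfolding t_def by blast
qed

section \<open>Equal-pay contracts\<close>

definition uniform_contract :: "real \<Rightarrow> nat set \<Rightarrow> nat \<Rightarrow> real" where
  "uniform_contract a B i = (if i \<in> B then a else 0)"

lemma contract_uniform_contract: "0 \<le> a \<Longrightarrow> a \<le> 1 \<Longrightarrow> contract n (uniform_contract a B)"
  by (simp add: contract_def uniform_contract_def)

lemma equal_pay_uniform_contract: "equal_pay n (uniform_contract a B)"
  by (simp add: equal_pay_def uniform_contract_def)

lemma principal_utility_uniform_contract:
  assumes "B \<subseteq> {..<n}"
  shows "principal_utility n f (uniform_contract a B) S = (1 - a * card B) * f S"
proof -
  have "(\<Sum>i<n. uniform_contract a B i) = (\<Sum>i\<in>{..<n} \<inter> B. a)"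
    by (simp add: uniform_contract_def sum.If_cases)
  also have "{..<n} \<inter> B = B"
    using assms by blast
  finally show ?thesis
    by (simp add: principal_utility_def mult.commute)
qed

lemma cost_nonneg: "valid_instance n T own c \<Longrightarrow> S \<subseteq> T \<Longrightarrow> 0 \<le> cost c S"
  unfolding valid_instance_def cost_def by (auto intro: sum_nonneg)

lemma cost_split: "finite S \<Longrightarrow> cost c S = cost c (S - A) + cost c (S \<inter> A)"
  unfolding cost_def using sum.Int_Diff[of S c A] by (simp add: add.commute)

text \<open>Under \<open>uniform_contract a B\<close> the change of utility of an agent of \<open>B\<close> who deviates
  equals the change of \<open>a f(D) - c(D)\<close>, an exact potential.\<close>

lemma pure_NE_uniform_contract_if_potential_max:
  assumes inst: "valid_instance n T own c"
    and S: "S \<subseteq> {j\<in>T. own j \<in> B}"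
    and max: "\<forall>D\<subseteq>{j\<in>T. own j \<in> B}. a * f D - cost c D \<le> a * f S - cost c S"
  shows "pure_NE n T own c f (uniform_contract a B) S"
  unfolding pure_NE_def
proof (intro conjI allI impI)
  show "S \<subseteq> T"
    using S by blast
  fix i S' assume "i < n" and S': "S' \<subseteq> actions_of T own i"
  define A where "A = actions_of T own i"
  define S2 where "S2 = (S - A) \<union> S'"
  have fin: "finite S" "finite S2"
    using inst S S' finite_subset by (fastforce simp: valid_instance_def S2_def A_def actions_of_def)+
  have S2_A: "S2 - A = S - A" "S2 \<inter> A = S'"
    using S' by (auto simp: S2_def A_def)
  show "utility T own c f (uniform_contract a B) i S2 \<le> utility T own c f (uniform_contract a B) i S"
  proof (cases "i \<in> B")
    case True
    have "S2 \<subseteq> {j\<in>T. own j \<in> B}"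
      using S S' True by (auto simp: S2_def A_def actions_of_def)
    then have "a * f S2 - cost c S2 \<le> a * f S - cost c S"
      using max by blast
    then show ?thesis
      using True cost_split[OF fin(1), of c A] cost_split[OF fin(2), of c A] S2_A
      by (simp add: utility_def uniform_contract_def A_def)
  next
    case False
    have "S \<inter> A = {}"
      using S False by (auto simp: A_def actions_of_def)
    moreover have "0 \<le> cost c S'"
      using cost_nonneg[OF inst] S' by (auto simp: actions_of_def)
    ultimately show ?thesis
      using False S2_A by (simp add: utility_def uniform_contract_def cost_def A_def)
  qed
qed

lemma ex_pure_NE_uniform_contract:
  assumes "valid_instance n T own c"
  shows "\<exists>S\<subseteq>{j\<in>T. own j \<in> B}. pure_NE n T own c f (uniform_contract a B) S \<and>
    (\<forall>D\<subseteq>{j\<in>T. own j \<in> B}. a * f D - cost c D \<le> a * f S - cost c S)"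
proof -
  define TB where "TB = {j\<in>T. own j \<in> B}"
  have "finite TB"
    using assms by (simp add: valid_instance_def TB_def)
  then obtain S where "S \<in> Pow TB" "\<forall>D\<in>Pow TB. a * f D - cost c D \<le> a * f S - cost c S"
    using ex_max_on_finite[of "Pow TB" "\<lambda>D. a * f D - cost c D"] by auto
  then have S: "S \<subseteq> TB" and max: "\<forall>D\<subseteq>TB. a * f D - cost c D \<le> a * f S - cost c S"
    by auto
  then show ?thesis
    using pure_NE_uniform_contract_if_potential_max[OF assms, of S B a f] unfolding TB_def by blast
qed

lemma ex_equal_pay_NE_nonneg:
  assumes "valid_instance n T own c" "valid_reward T f"
  shows "\<exists>\<alpha> S. contract n \<alpha> \<and> equal_pay n \<alpha> \<and> pure_NE n T own c f \<alpha> S \<and>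
    0 \<le> principal_utility n f \<alpha> S"
proof -
  obtain S where "S \<subseteq> {j\<in>T. own j \<in> {}}" "pure_NE n T own c f (uniform_contract 0 {}) S"
    using ex_pure_NE_uniform_contract[OF assms(1), where B="{}" and a=0 and f=f] by blast
  moreover have "0 \<le> principal_utility n f (uniform_contract 0 {}) {}"
    using assms(2) by (simp add: principal_utility_uniform_contract valid_reward_def)
  ultimately show ?thesis
    using contract_uniform_contract equal_pay_uniform_contract by fastforce
qed

lemma XOS_supporting_additive:
  assumes "XOS T f" "S \<subseteq> T"
  shows "\<exists>w. (\<forall>j\<in>T. 0 \<le> w j) \<and> (\<forall>U\<subseteq>T. sum w U \<le> f U) \<and> f S = sum w S"
proof -
  obtain L :: "(nat \<Rightarrow> real) set" where L: "finite L" "L \<noteq> {}" "\<forall>w\<in>L. \<forall>j\<in>T. 0 \<le> w j"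
      "\<forall>U\<subseteq>T. f U = Max ((\<lambda>w. sum w U) ` L)"
    using assms(1) unfolding XOS_def by blast
  obtain w where "w \<in> L" "sum w S = Max ((\<lambda>w. sum w S) ` L)"
    using Max_in[of "(\<lambda>w. sum w S) ` L"] L(1,2) by fastforce
  then show ?thesis
    using L assms(2) by (intro exI[of _ w]) auto
qed

section \<open>Equilibria supported by an additive function\<close>

lemma sum_group_by_owner:
  assumes "finite A" "finite B"
  shows "(\<Sum>i\<in>B. sum h {j\<in>A. own j = i}) = sum h {j\<in>A. own j \<in> B}"
proof -
  have "(\<Sum>i\<in>B. sum h {j\<in>{j\<in>A. own j \<in> B}. own j = i}) = sum h {j\<in>A. own j \<in> B}"
    using assms by (intro sum.group) auto
  moreover have "{j\<in>{j\<in>A. own j \<in> B}. own j = i} = {j\<in>A. own j = i}" if "i \<in> B" for i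
    using that by auto
  ultimately show ?thesis
    by simp
qed

text \<open>\<open>\<beta>\<close> and \<open>Ss\<close> stand for the contract \<open>\<alpha>\<^sup>*\<close> and its equilibrium \<open>S\<^sup>*\<close>; \<open>w\<close> is the
  additive function of the XOS family that attains \<open>f\<close> at \<open>S\<^sup>*\<close>.\<close>

locale supported_NE =
  fixes n :: nat and T :: "nat set" and own :: "nat \<Rightarrow> nat" and c :: "nat \<Rightarrow> real"
    and f :: "nat set \<Rightarrow> real" and \<beta> :: "nat \<Rightarrow> real" and Ss :: "nat set" and w :: "nat \<Rightarrow> real"
  assumes inst: "valid_instance n T own c" and rew: "valid_reward T f"
    and ctr: "contract n \<beta>" and NE: "pure_NE n T own c f \<beta> Ss"
    and w_nonneg: "\<forall>j\<in>T. 0 \<le> w j" and w_le_f: "\<forall>U\<subseteq>T. sum w U \<le> f U" and f_Ss: "f Ss = sum w Ss"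
begin

definition share :: "nat \<Rightarrow> real" where
  "share i = sum w {j\<in>Ss. own j = i}"

lemma Ss_subset: "Ss \<subseteq> T"
  using NE by (simp add: pure_NE_def)

lemma finite_Ss: "finite Ss"
  using inst Ss_subset finite_subset by (auto simp: valid_instance_def)

lemma f_mono: "S \<subseteq> U \<Longrightarrow> U \<subseteq> T \<Longrightarrow> f S \<le> f U"
  using rew by (simp add: valid_reward_def)

lemma \<beta>_nonneg: "i < n \<Longrightarrow> 0 \<le> \<beta> i"
  using ctr by (simp add: contract_def)

lemma share_nonneg: "0 \<le> share i"
  unfolding share_def using w_nonneg Ss_subset by (intro sum_nonneg) auto

lemma sum_share: "finite B \<Longrightarrow> sum share B = sum w {j\<in>Ss. own j \<in> B}"
  unfolding share_def using sum_group_by_owner finite_Ss by blast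

lemma f_Ss_eq_sum_share: "f Ss = sum share {..<n}"
proof -
  have "{j\<in>Ss. own j \<in> {..<n}} = Ss"
    using Ss_subset inst by (auto simp: valid_instance_def)
  then show ?thesis
    using sum_share[of "{..<n}"] f_Ss by simp
qed

lemma NE_deviation:
  assumes "i < n" "S' \<subseteq> actions_of T own i"
  shows "\<beta> i * f ((Ss - actions_of T own i) \<union> S') - cost c S' \<le> \<beta> i * f Ss - cost c {j\<in>Ss. own j = i}"
proof -
  have "utility T own c f \<beta> i ((Ss - actions_of T own i) \<union> S') \<le> utility T own c f \<beta> i Ss"
    using NE assms unfolding pure_NE_def by blast
  moreover have "((Ss - actions_of T own i) \<union> S') \<inter> actions_of T own i = S'"
    "Ss \<inter> actions_of T own i = {j\<in>Ss. own j = i}"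
    using assms(2) Ss_subset by (auto simp: actions_of_def)
  ultimately show ?thesis
    by (simp add: utility_def)
qed

lemma cost_le_\<beta>_share:
  assumes "i < n"
  shows "cost c {j\<in>Ss. own j = i} \<le> \<beta> i * share i"
proof -
  have "Ss - actions_of T own i = Ss - {j\<in>Ss. own j = i}"
    using Ss_subset by (auto simp: actions_of_def)
  then have "f Ss - share i \<le> f (Ss - actions_of T own i)"
    using w_le_f[rule_format, of "Ss - {j\<in>Ss. own j = i}"] Ss_subset finite_Ss f_Ss
    by (auto simp: share_def sum_diff)
  then have "\<beta> i * (f Ss - share i) \<le> \<beta> i * f (Ss - actions_of T own i)"
    using \<beta>_nonneg[OF assms] by (intro mult_left_mono)
  then show ?thesis
    using NE_deviation[OF assms, of "{}"] by (simp add: cost_def algebra_simps)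
qed

lemma cost_le_sum_\<beta>_share:
  assumes "B \<subseteq> {..<n}"
  shows "cost c {j\<in>Ss. own j \<in> B} \<le> (\<Sum>i\<in>B. \<beta> i * share i)"
proof -
  have "finite B"
    using assms finite_subset by blast
  then have "cost c {j\<in>Ss. own j \<in> B} = (\<Sum>i\<in>B. cost c {j\<in>Ss. own j = i})"
    unfolding cost_def using sum_group_by_owner[OF finite_Ss, of B c own] by simp
  also have "\<dots> \<le> (\<Sum>i\<in>B. \<beta> i * share i)"
    using assms cost_le_\<beta>_share by (intro sum_mono) auto
  finally show ?thesis .
qed

lemma sum_share_le_f: "finite B \<Longrightarrow> sum share B \<le> f {j\<in>Ss. own j \<in> B}"
  using sum_share w_le_f Ss_subset by (metis (no_types, lifting) mem_Collect_eq subset_iff)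

lemma share_le_f: "share i \<le> f {j\<in>Ss. own j = i}"
  unfolding share_def using w_le_f Ss_subset by (metis (no_types, lifting) mem_Collect_eq subset_iff)

lemma f_Ss_split: "i < n \<Longrightarrow> f Ss = share i + sum share ({..<n} - {i})"
  using f_Ss_eq_sum_share by (simp add: sum.remove)

lemma potential_max_ge_share:
  fixes a :: real
  assumes B: "B \<subseteq> {..<n}" and a: "0 < a" and \<beta>_B: "\<forall>i\<in>B. \<beta> i \<le> 2 * a / 3"
    and S: "S \<subseteq> {j\<in>T. own j \<in> B}"
    and max: "\<forall>D\<subseteq>{j\<in>T. own j \<in> B}. a * f D - cost c D \<le> a * f S - cost c S"
  shows "sum share B \<le> 3 * f S"
proof -
  define D where "D = {j\<in>Ss. own j \<in> B}"
  have "D \<subseteq> {j\<in>T. own j \<in> B}"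
    using Ss_subset by (auto simp: D_def)
  then have "a * f D - cost c D \<le> a * f S - cost c S"
    using max by blast
  moreover have "0 \<le> cost c S"
    using cost_nonneg[OF inst] S by auto
  moreover have "a * sum share B \<le> a * f D"
    using sum_share_le_f[OF finite_subset[OF B]] a by (simp add: D_def)
  moreover have "cost c D \<le> (\<Sum>i\<in>B. \<beta> i * share i)"
    unfolding D_def by (rule cost_le_sum_\<beta>_share[OF B])
  moreover have "\<dots> \<le> (\<Sum>i\<in>B. 2 * a / 3 * share i)"
    using \<beta>_B share_nonneg by (intro sum_mono mult_right_mono) auto
  moreover have "\<dots> = 2 * a / 3 * sum share B"
    by (simp add: sum_distrib_left)
  ultimately have "a * (sum share B / 3) \<le> a * f S"
    by linarith
  then show ?thesis
    using a by simp
qed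

lemma uniform_contract_bound:
  fixes a :: real
  assumes B: "B \<subseteq> {..<n}" and a: "0 < a" "a \<le> 1" "a * card B \<le> 3/4"
    and \<beta>_B: "\<forall>i\<in>B. \<beta> i \<le> 2 * a / 3"
  shows "\<exists>\<alpha> S. contract n \<alpha> \<and> equal_pay n \<alpha> \<and> pure_NE n T own c f \<alpha> S \<and>
    sum share B / 12 \<le> principal_utility n f \<alpha> S"
proof -
  obtain S where S: "S \<subseteq> {j\<in>T. own j \<in> B}" "pure_NE n T own c f (uniform_contract a B) S"
    and max: "\<forall>D\<subseteq>{j\<in>T. own j \<in> B}. a * f D - cost c D \<le> a * f S - cost c S"
    using ex_pure_NE_uniform_contract[OF inst, where B=B and a=a and f=f] by blast
  have "1/4 * (sum share B / 3) \<le> (1 - a * card B) * f S"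
    using potential_max_ge_share[OF B a(1) \<beta>_B S(1) max] a(3) sum_nonneg[of B share] share_nonneg
    by (intro mult_mono) auto
  then have "sum share B / 12 \<le> principal_utility n f (uniform_contract a B) S"
    using principal_utility_uniform_contract[OF B] by simp
  moreover have "contract n (uniform_contract a B)"
    using a by (intro contract_uniform_contract) auto
  ultimately show ?thesis
    using S(2) equal_pay_uniform_contract by blast
qed

lemma uniform_contract_level_bound:
  assumes B: "B \<subseteq> {..<n}" and \<theta>: "1 \<le> \<theta>" and card_B: "card B \<le> \<theta>^b"
    and \<beta>_B: "\<forall>j\<in>B. 2 * real \<theta>^b * \<beta> j \<le> 1"
  shows "\<exists>\<alpha> S. contract n \<alpha> \<and> equal_pay n \<alpha> \<and> pure_NE n T own c f \<alpha> S \<and>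
    sum share B / 12 \<le> principal_utility n f \<alpha> S"
proof -
  define a where "a = 3 / (4 * real \<theta>^b)"
  have \<theta>_pow: "1 \<le> real \<theta>^b"
    using \<theta> by simp
  then have a: "0 < a" "a \<le> 1"
    unfolding a_def divide_le_eq_1 by (intro divide_pos_pos | linarith)+
  have "real (card B) \<le> real \<theta>^b"
    using card_B by (metis of_nat_le_iff of_nat_power)
  then have "a * card B \<le> a * real \<theta>^b"
    using a(1) by simp
  also have "\<dots> = 3/4"
    using \<theta> by (simp add: a_def)
  finally have "a * card B \<le> 3/4" .
  moreover have "\<beta> j \<le> 2 * a / 3" if "j \<in> B" for j
  proof -
    have "\<beta> j * (2 * real \<theta>^b) \<le> 1"
      using \<beta>_B that by (simp add: mult.commute)
    then show ?thesis
      using \<theta> by (simp add: a_def le_divide_eq)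
  qed
  ultimately show ?thesis
    using uniform_contract_bound[OF B a] by blast
qed

lemma low_pay_agents_bound:
  assumes n: "exp 16 \<le> real n" and A: "A \<subseteq> {..<n}"
    and \<beta>_A: "\<forall>j\<in>A. \<beta> j \<le> 1/2" "sum \<beta> A \<le> 1"
  shows "\<exists>\<alpha> S. contract n \<alpha> \<and> equal_pay n \<alpha> \<and> pure_NE n T own c f \<alpha> S \<and>
    ln (ln (real n)) / ln (real n) * sum share A / 120 \<le> principal_utility n f \<alpha> S"
proof -
  obtain \<theta> K where \<theta>: "2 \<le> \<theta>" "n \<le> \<theta>^K"
    and K: "real K + 1 + 2 * real \<theta> \<le> 10 * ln (real n) / ln (ln (real n))"
    using ex_level_parameters[OF n] by blast
  have card_A: "card A \<le> \<theta>^K"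
    using card_mono[OF _ A] \<theta>(2) by simp
  have \<beta>_A': "\<forall>j\<in>A. 0 \<le> \<beta> j \<and> \<beta> j \<le> 1/2"
    using \<beta>_A(1) A \<beta>_nonneg by auto
  have share_A: "\<forall>j\<in>A. 0 \<le> share j"
    using share_nonneg by auto
  obtain B b where B: "B \<subseteq> A" "card B \<le> \<theta>^b" "\<forall>j\<in>B. 2 * real \<theta>^b * \<beta> j \<le> 1"
    and share_B: "sum share A \<le> (real K + 1 + 2 * real \<theta>) * sum share B"
    using ex_level_subset[OF finite_subset[OF A] _ card_A \<beta>_A' \<beta>_A(2) share_A] \<theta>(1) by auto
  have "B \<subseteq> {..<n}" "1 \<le> \<theta>"
    using B(1) A \<theta>(1) by auto
  then obtain \<alpha> S where res: "contract n \<alpha>" "equal_pay n \<alpha>" "pure_NE n T own c f \<alpha> S"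
    "sum share B / 12 \<le> principal_utility n f \<alpha> S"
    using uniform_contract_level_bound[OF _ _ B(2,3)] by blast
  have ln: "16 \<le> ln (real n)" "0 < ln (ln (real n))"
    using ln_ge_if_exp_le[OF n] by simp_all
  have "sum share A \<le> 10 * ln (real n) / ln (ln (real n)) * sum share B"
    using share_B K sum_nonneg[of B share] share_nonneg by (meson mult_right_mono order_trans)
  then have "ln (ln (real n)) / ln (real n) * sum share A \<le> 10 * sum share B"
    using ln by (simp add: field_simps)
  then show ?thesis
    using res by fastforce
qed

lemma single_agent_bound:
  assumes i: "i < n" and \<beta>_i: "\<beta> i < 1"
  shows "\<exists>\<alpha> S. contract n \<alpha> \<and> equal_pay n \<alpha> \<and> pure_NE n T own c f \<alpha> S \<and>
    (1 - \<beta> i) * share i / 2 - (f Ss - share i) \<le> principal_utility n f \<alpha> S"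
proof -
  define a where "a = (1 + \<beta> i) / 2"
  have a: "0 \<le> a" "a \<le> 1" "1 - a = (1 - \<beta> i) / 2" "a - \<beta> i = (1 - \<beta> i) / 2"
    using \<beta>_nonneg[OF i] \<beta>_i by (auto simp: a_def field_simps)
  obtain S where S: "S \<subseteq> {j\<in>T. own j \<in> {i}}" "pure_NE n T own c f (uniform_contract a {i}) S"
    and max: "\<forall>D\<subseteq>{j\<in>T. own j \<in> {i}}. a * f D - cost c D \<le> a * f S - cost c S"
    using ex_pure_NE_uniform_contract[OF inst, where B="{i}" and a=a and f=f] by blast
  define D where "D = {j\<in>Ss. own j = i}"
  have S_i: "S \<subseteq> actions_of T own i"
    using S(1) by (auto simp: actions_of_def)
  have "D \<subseteq> {j\<in>T. own j \<in> {i}}"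
    using Ss_subset by (auto simp: D_def)
  then have "a * f D - cost c D \<le> a * f S - cost c S"
    using max by blast
  moreover have "\<beta> i * f S - cost c S \<le> \<beta> i * f Ss - cost c D"
  proof -
    have "(Ss - actions_of T own i) \<union> S \<subseteq> T"
      using Ss_subset S_i by (auto simp: actions_of_def)
    then have "f S \<le> f ((Ss - actions_of T own i) \<union> S)"
      by (intro f_mono) auto
    then show ?thesis
      using NE_deviation[OF i S_i] mult_left_mono \<beta>_nonneg[OF i] unfolding D_def by fastforce
  qed
  moreover have "a * share i \<le> a * f D"
    using share_le_f a(1) by (simp add: D_def mult_left_mono)
  moreover have "\<beta> i * (f Ss - share i) \<le> f Ss - share i"
    using f_Ss_split[OF i] sum_nonneg[of _ share] share_nonneg \<beta>_i \<beta>_nonneg[OF i]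
    by (simp add: mult_left_le_one_le)
  ultimately have "(a - \<beta> i) * share i - (f Ss - share i) \<le> (a - \<beta> i) * f S"
    by (simp add: algebra_simps)
  then have "(1 - \<beta> i) * share i / 2 - (f Ss - share i) \<le> (1 - a) * f S"
    unfolding a(3,4) by simp
  then have "(1 - \<beta> i) * share i / 2 - (f Ss - share i) \<le> principal_utility n f (uniform_contract a {i}) S"
    using principal_utility_uniform_contract[of "{i}" n f a S] i by simp
  moreover have "contract n (uniform_contract a {i})"
    using a by (intro contract_uniform_contract) auto
  ultimately show ?thesis
    using S(2) equal_pay_uniform_contract by blast
qed

lemma equal_pay_bound_if_budget_ge_1:
  assumes "1 \<le> sum \<beta> {..<n}" "0 \<le> r"
  shows "\<exists>\<alpha> S. contract n \<alpha> \<and> equal_pay n \<alpha> \<and> pure_NE n T own c f \<alpha> S \<and>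
    r * principal_utility n f \<beta> Ss \<le> principal_utility n f \<alpha> S"
proof -
  have "0 \<le> f Ss"
    using rew Ss_subset by (simp add: valid_reward_def)
  then have "r * principal_utility n f \<beta> Ss \<le> 0"
    using assms by (simp add: principal_utility_def mult_nonneg_nonpos mult_nonpos_nonneg)
  then show ?thesis
    using ex_equal_pay_NE_nonneg[OF inst rew] by (meson order_trans)
qed

lemma principal_utility_le_split:
  assumes i: "i < n" and budget: "sum \<beta> {..<n} < 1"
  shows "0 \<le> principal_utility n f \<beta> Ss"
    "principal_utility n f \<beta> Ss \<le> (1 - \<beta> i) * share i + sum share ({..<n} - {i})"
proof -
  have "0 \<le> f Ss"
    using rew Ss_subset by (simp add: valid_reward_def)
  then show "0 \<le> principal_utility n f \<beta> Ss"
    using budget by (simp add: principal_utility_def)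
  have "\<beta> i \<le> sum \<beta> {..<n}"
    using i \<beta>_nonneg by (intro member_le_sum) auto
  then have "(1 - sum \<beta> {..<n}) * share i \<le> (1 - \<beta> i) * share i"
    using share_nonneg by (intro mult_right_mono) auto
  moreover have "0 \<le> sum \<beta> {..<n}"
    using \<beta>_nonneg by (intro sum_nonneg) auto
  then have "(1 - sum \<beta> {..<n}) * sum share ({..<n} - {i}) \<le> sum share ({..<n} - {i})"
    using budget share_nonneg by (intro mult_left_le_one_le sum_nonneg) auto
  ultimately show "principal_utility n f \<beta> Ss \<le> (1 - \<beta> i) * share i + sum share ({..<n} - {i})"
    unfolding principal_utility_def f_Ss_split[OF i] by (simp add: algebra_simps)
qed

lemma equal_pay_bound_if_budget_lt_1:
  assumes n: "exp 16 \<le> real n" and budget: "sum \<beta> {..<n} < 1"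
  shows "\<exists>\<alpha> S. contract n \<alpha> \<and> equal_pay n \<alpha> \<and> pure_NE n T own c f \<alpha> S \<and>
    principal_utility n f \<alpha> S \<ge> 1/600 * (ln (ln (real n)) / ln (real n)) * principal_utility n f \<beta> Ss"
proof -
  define \<rho> where "\<rho> = ln (ln (real n)) / ln (real n)"
  have \<rho>: "0 \<le> \<rho>" "\<rho> \<le> 1"
    using ln_ln_div_ln_bounds[of "real n"] n by (simp_all add: \<rho>_def order_trans[OF _ n])
  have "n \<noteq> 0"
    using n exp_gt_zero[of 16] by (intro notI) simp
  then obtain i where i: "i < n" "\<beta> i < 1"
    and \<beta>_A: "sum \<beta> ({..<n} - {i}) < 1" "\<forall>j\<in>{..<n} - {i}. \<beta> j < 1/2"
    using ex_max_index_others_lt_half[of "{..<n}" \<beta>] \<beta>_nonneg budget by auto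
  define A where "A = {..<n} - {i}"
  have A: "A \<subseteq> {..<n}" "\<forall>j\<in>A. \<beta> j \<le> 1/2" "sum \<beta> A \<le> 1"
    using \<beta>_A unfolding A_def by (blast intro: less_imp_le)+
  note PU = principal_utility_le_split[OF i(1) budget, folded A_def]
  show ?thesis
  proof (cases "sum share A \<le> (1 - \<beta> i) * share i / 4")
    case True
    obtain \<alpha> S where res: "contract n \<alpha>" "equal_pay n \<alpha>" "pure_NE n T own c f \<alpha> S"
      "(1 - \<beta> i) * share i / 2 - (f Ss - share i) \<le> principal_utility n f \<alpha> S"
      using single_agent_bound[OF i] by blast
    have "\<rho> * principal_utility n f \<beta> Ss \<le> principal_utility n f \<beta> Ss"
      using \<rho> PU(1) by (simp add: mult_left_le_one_le)
    moreover have "principal_utility n f \<beta> Ss / 5 \<le> principal_utility n f \<alpha> S"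
      using res(4) PU(2) True f_Ss_split[OF i(1)] by (simp add: A_def)
    ultimately have "1/600 * \<rho> * principal_utility n f \<beta> Ss \<le> principal_utility n f \<alpha> S"
      using PU(1) by linarith
    then show ?thesis
      using res unfolding \<rho>_def by blast
  next
    case False
    obtain \<alpha> S where res: "contract n \<alpha>" "equal_pay n \<alpha>" "pure_NE n T own c f \<alpha> S"
      "\<rho> * sum share A / 120 \<le> principal_utility n f \<alpha> S"
      using low_pay_agents_bound[OF n A] unfolding \<rho>_def by blast
    have "1/600 * \<rho> * principal_utility n f \<beta> Ss \<le> 1/600 * \<rho> * (5 * sum share A)"
      using PU(2) False \<rho>(1) by (intro mult_left_mono) auto
    then show ?thesis
      using res unfolding \<rho>_def by fastforce
  qed
qed

lemma equal_pay_approximation: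
  assumes n: "exp 16 \<le> real n"
  shows "\<exists>\<alpha> S. contract n \<alpha> \<and> equal_pay n \<alpha> \<and> pure_NE n T own c f \<alpha> S \<and>
    principal_utility n f \<alpha> S \<ge> 1/600 * (ln (ln (real n)) / ln (real n)) * principal_utility n f \<beta> Ss"
proof (cases "sum \<beta> {..<n} < 1")
  case True
  then show ?thesis
    by (rule equal_pay_bound_if_budget_lt_1[OF n])
next
  case False
  have "0 \<le> ln (ln (real n)) / ln (real n)"
    using ln_ln_div_ln_bounds[of "real n"] n by (simp add: order_trans[OF _ n])
  then show ?thesis
    using equal_pay_bound_if_budget_ge_1[of "1/600 * (ln (ln (real n)) / ln (real n))"] False by auto
qed

end

theorem theorem5p3:
  shows "\<exists>C>0. \<exists>N. \<forall>n\<ge>N. \<forall>T own c f \<alpha>s Ss.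
    valid_instance n T own c \<longrightarrow> valid_reward T f \<longrightarrow> XOS T f \<longrightarrow>
    contract n \<alpha>s \<longrightarrow> pure_NE n T own c f \<alpha>s Ss \<longrightarrow>
    (\<exists>\<alpha> S. contract n \<alpha> \<and> equal_pay n \<alpha> \<and> pure_NE n T own c f \<alpha> S \<and>
       principal_utility n f \<alpha> S \<ge>
         C * (ln (ln (real n)) / ln (real n)) * principal_utility n f \<alpha>s Ss)"
proof (intro exI[of _ "1/600"] conjI exI[of _ "nat \<lceil>exp (16::real)\<rceil>"] allI impI)
  fix n T own c f \<alpha>s Ss
  assume "nat \<lceil>exp (16::real)\<rceil> \<le> n" and inst: "valid_instance n T own c" and rew: "valid_reward T f"
    and xos: "XOS T f" and ctr: "contract n \<alpha>s" and NE: "pure_NE n T own c f \<alpha>s Ss"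
  then have n: "exp 16 \<le> real n"
    by linarith
  have "Ss \<subseteq> T"
    using NE by (simp add: pure_NE_def)
  then obtain w where "\<forall>j\<in>T. 0 \<le> w j" "\<forall>U\<subseteq>T. sum w U \<le> f U" "f Ss = sum w Ss"
    using XOS_supporting_additive[OF xos] by blast
  then interpret supported_NE n T own c f \<alpha>s Ss w
    using inst rew ctr NE by unfold_locales
  show "\<exists>\<alpha> S. contract n \<alpha> \<and> equal_pay n \<alpha> \<and> pure_NE n T own c f \<alpha> S \<and>
      principal_utility n f \<alpha> S \<ge> 1/600 * (ln (ln (real n)) / ln (real n)) * principal_utility n f \<alpha>s Ss"
    using equal_pay_approximation[OF n] .
qed simp

end
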